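(* Let $C$ be a finite group and $G$ a group whose commutator subgroup $[G,G]$ is $C$ and whose abelianization $G/C$ is free abelian of finite rank. If $N\lhd G$ is a normal subgroup with $N\cap C$ trivial, then $N$ is contained in the center of $G$. *)

theory Defs
  imports "HOL-Algebra.Algebra" "HOL-Algebra.Free_Abelian_Groups"
begin

definition center :: "('a, 'b) monoid_scheme \<Rightarrow> 'a set" where
  "center G = {z \<in> carrier G. \<forall>g \<in> carrier G. z \<otimes>\<^bsub>G\<^esub> g = g \<otimes>\<^bsub>G\<^esub> z}"

end

theory Submission
  imports Defs
begin

text \<open>For n in N and g in G the commutator n g n\<inverse> g\<inverse> lies in N, because N is normal, and
  in the derived subgroup C, so it is trivial and n commutes with g.\<close>

lemma (in group) commutator_eq_one_iff:
  assumes "x \<in> carrier G" and "y \<in> carrier G"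
  shows "x \<otimes> y \<otimes> inv x \<otimes> inv y = \<one> \<longleftrightarrow> x \<otimes> y = y \<otimes> x"
proof
  assume "x \<otimes> y \<otimes> inv x \<otimes> inv y = \<one>"
  moreover have "x \<otimes> y \<otimes> inv x \<otimes> inv y \<otimes> (y \<otimes> x) = x \<otimes> y"
    using assms by (simp add: m_assoc inv_solve_left')
  ultimately show "x \<otimes> y = y \<otimes> x"
    using assms by simp
next
  assume "x \<otimes> y = y \<otimes> x"
  then show "x \<otimes> y \<otimes> inv x \<otimes> inv y = \<one>"
    using assms by (simp add: m_assoc)
qed

lemma (in group) commutator_in_derived:
  assumes "x \<in> carrier G" and "y \<in> carrier G"
  shows "x \<otimes> y \<otimes> inv x \<otimes> inv y \<in> derived G (carrier G)"
  unfolding derived_def using assms by (auto intro!: generate.incl)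

lemma (in normal) commutator_closed:
  assumes "n \<in> H" and "g \<in> carrier G"
  shows "n \<otimes> g \<otimes> inv n \<otimes> inv g \<in> H"
proof -
  have "g \<otimes> inv n \<otimes> inv g \<in> H"
    using assms by (simp add: inv_op_closed2)
  then have "n \<otimes> (g \<otimes> inv n \<otimes> inv g) \<in> H"
    using assms(1) by simp
  then show ?thesis
    using assms by (simp add: m_assoc)
qed

lemma normal_subgroup_central_if_meets_derived_trivially:
  fixes G (structure)
  assumes "group G" and "N \<lhd> G" and "N \<inter> derived G (carrier G) = {\<one>}"
  shows "N \<subseteq> center G"
proof
  interpret group G by fact
  interpret normal N G by fact
  fix n assume n: "n \<in> N"
  have "n \<otimes> g = g \<otimes> n" if g: "g \<in> carrier G" for g
  proof -
    have "n \<otimes> g \<otimes> inv n \<otimes> inv g \<in> N \<inter> derived G (carrier G)"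
      using n g by (simp add: commutator_closed commutator_in_derived)
    then have "n \<otimes> g \<otimes> inv n \<otimes> inv g = \<one>"
      using assms(3) by simp
    then show ?thesis
      using n g by (simp add: commutator_eq_one_iff)
  qed
  moreover have "n \<in> carrier G"
    using n by (rule mem_carrier)
  ultimately show "n \<in> center G"
    unfolding center_def by simp
qed

theorem proposition11:
  fixes G :: "('a, 'b) monoid_scheme" and C N :: "'a set"
  assumes "group G"
    and "C = derived G (carrier G)"
    and "finite C"
    and "\<exists>n::nat. G Mod C \<cong> free_Abelian_group {..<n}"
    and "N \<lhd> G"
    and "N \<inter> C = {\<one>\<^bsub>G\<^esub>}"
  shows "N \<subseteq> center G"
  using normal_subgroup_central_if_meets_derived_trivially assms by simp

end
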